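(* Let $t\ge1$ be an integer and $\mathcal{I}\subseteq[K]$. Let $x,y\in\mathbb{R}^K$ with $x_i,y_i\in(0,1]$ for all $i\in\mathcal{I}$ and $\sum_{i\in\mathcal{I}}x_i=\sum_{i\in\mathcal{I}}y_i$, and suppose there is $c\in\mathbb{R}$ with $\nabla\phi^{t+1}_{\mathcal{I}}(y)=\nabla\phi^t_{\mathcal{I}}(x)-\hat\ell^t_{\mathcal{I}}+c\cdot\mathbf{1}_{\mathcal{I}}$ (coordinatewise on $\mathcal{I}$). Then $$\sum_{i\in\mathcal{I}}y_i^{4/3}\le2\Big(1+\frac1t\Big)^2\sum_{i\in\mathcal{I}}x_i^{4/3}\le8\sum_{i\in\mathcal{I}}x_i^{4/3}.$$
   Context: $\phi^s(x)=-3K^{1/6}\sqrt{s}\sum_{i\in[K]}x_i^{2/3}$ (the $2/3$-Tsallis regularizer of Decoupled-Tsallis-INF) and $\phi^s_{\mathcal{I}}(x)=-3K^{1/6}\sqrt{s}\sum_{i\in\mathcal{I}}x_i^{2/3}$. For a vector $v$, $v_{\mathcal{I}}$ agrees with $v$ on $\mathcal{I}$ and is $0$ elsewhere; $\mathbf{1}_{\mathcal{I}}$ is the indicator vector of $\mathcal{I}$. $\hat\ell^t$ is the loss estimator of Decoupled-Tsallis-INF: $\hat\ell^t_i=\mathbb{1}\{j^t=i\}\ell^t_i/g^t_i$ for some $j^t\in[K]$, $\ell^t\in[0,1]^K$ and a probability vector $g^t$ with positive entries. *)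

theory Defs
  imports "HOL-Analysis.Analysis"
begin

text \<open>Vectors in R^K are functions nat => real, indexed by [K] = {1..K}.\<close>

definition phi_I :: "nat \<Rightarrow> real \<Rightarrow> nat set \<Rightarrow> (nat \<Rightarrow> real) \<Rightarrow> real" where
  "phi_I K s I x = - 3 * real K powr (1/6) * sqrt s * (\<Sum>i\<in>I. x i powr (2/3))"

definition grad_phi_I :: "nat \<Rightarrow> real \<Rightarrow> nat set \<Rightarrow> (nat \<Rightarrow> real) \<Rightarrow> nat \<Rightarrow> real" where
  "grad_phi_I K s I x i = deriv (\<lambda>z. phi_I K s I (x(i := z))) (x i)"

definition loss_est :: "nat \<Rightarrow> (nat \<Rightarrow> real) \<Rightarrow> (nat \<Rightarrow> real) \<Rightarrow> nat \<Rightarrow> real" where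
  "loss_est j l g i = (if j = i then l i / g i else 0)"

end

theory Submission
  imports Defs
begin

text \<open>Up to the factor -2 K^(1/6), the i-th gradient coordinate of phi^s_I at u is the dual
  coordinate sqrt s * u_i^(-1/3). So the update says that sqrt (t+1) y_i^(-1/3) - sqrt t x_i^(-1/3)
  has the sign of hat ell_i - c, where hat ell_i >= 0 vanishes off the played arm j.
  If c <= 0, all these differences are nonnegative, which gives y_i^(4/3) <= (1 + 1/t)^2 x_i^(4/3)
  coordinatewise. If c > 0, every coordinate other than j grows, so the preserved mass only
  moves out of x_j; convexity and superadditivity of z^(4/3) show that such a transfer raises
  the sum of 4/3-powers by at most the factor 2^(1/3).\<close>

lemma add_powr_le_two_powr_mult:
  fixes a b p :: real
  assumes "0 \<le> a" "0 \<le> b" "1 \<le> p"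
  shows "(a + b) powr p \<le> 2 powr (p - 1) * (a powr p + b powr p)"
proof (cases "a = 0 \<or> b = 0")
  case True
  have "1 \<le> (2::real) powr (p - 1)" using assms(3) by (intro ge_one_powr_ge_zero) auto
  moreover have "(a + b) powr p = a powr p + b powr p" using True by auto
  ultimately show ?thesis using mult_right_mono[of 1 "2 powr (p - 1)" "a powr p + b powr p"] by simp
next
  case False
  then have "((a + b) / 2) powr p \<le> (a powr p + b powr p) / 2"
    using convex_onD[OF powr_convex[OF assms(3)], of "1/2" a b] assms(1,2)
    by (simp add: field_simps)
  moreover have "((a + b) / 2) powr p = (a + b) powr p / (2 * 2 powr (p - 1))"
    using assms by (simp add: powr_divide powr_mult_base)
  ultimately show ?thesis by (simp add: field_simps)
qed

lemma add_powr_le_powr_add: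
  fixes a b p :: real
  assumes "0 \<le> a" "0 \<le> b" "1 \<le> p"
  shows "a powr p + b powr p \<le> (a + b) powr p"
proof -
  have "a * a powr (p - 1) + b * b powr (p - 1) \<le> a * (a + b) powr (p - 1) + b * (a + b) powr (p - 1)"
    using assms by (intro add_mono mult_left_mono powr_mono2) auto
  then show ?thesis using assms by (simp add: powr_mult_base distrib_right[symmetric])
qed

lemma sum_powr_le_powr_sum:
  fixes d :: "'a \<Rightarrow> real" and p :: real
  assumes "finite S" "\<forall>i\<in>S. 0 \<le> d i" "1 \<le> p"
  shows "(\<Sum>i\<in>S. d i powr p) \<le> (\<Sum>i\<in>S. d i) powr p"
  using assms(1,2)
proof (induction S rule: finite_induct)
  case (insert i S)
  then have "d i powr p + (\<Sum>k\<in>S. d k powr p) \<le> d i powr p + (\<Sum>k\<in>S. d k) powr p" by simp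
  also have "\<dots> \<le> (d i + (\<Sum>k\<in>S. d k)) powr p"
    using insert.prems assms(3) by (intro add_powr_le_powr_add sum_nonneg) auto
  finally show ?case using insert.hyps by simp
qed simp

lemma sum_powr_le_if_mass_moves_from_one:
  fixes x y :: "'a \<Rightarrow> real" and p :: real
  assumes fin: "finite I" and x: "\<forall>i\<in>I. 0 \<le> x i" and y: "\<forall>i\<in>I. 0 \<le> y i"
    and mass: "(\<Sum>i\<in>I. x i) = (\<Sum>i\<in>I. y i)" and grow: "\<forall>i\<in>I - {j}. x i \<le> y i"
    and p: "1 \<le> p"
  shows "(\<Sum>i\<in>I. y i powr p) \<le> 2 powr (p - 1) * (\<Sum>i\<in>I. x i powr p)"
proof -
  define S where "S = I - {j}"
  define D where "D = (\<Sum>i\<in>S. y i - x i)"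
  define C where "C = (2::real) powr (p - 1)"
  have C: "1 \<le> C" unfolding C_def using p by (intro ge_one_powr_ge_zero) auto
  \<comment> \<open>Convexity splits each grown coordinate as x_i + (y_i - x_i); superadditivity then
    collects the increments into D, which is exactly the mass x_j - y_j lost by j.\<close>
  have "y i powr p \<le> C * (x i powr p + (y i - x i) powr p)" if "i \<in> S" for i
    using add_powr_le_two_powr_mult[of "x i" "y i - x i" p] that x grow p
    unfolding C_def S_def by simp
  then have "(\<Sum>i\<in>S. y i powr p) \<le> (\<Sum>i\<in>S. C * (x i powr p + (y i - x i) powr p))"
    by (rule sum_mono)
  also have "\<dots> = C * ((\<Sum>i\<in>S. x i powr p) + (\<Sum>i\<in>S. (y i - x i) powr p))"
    by (simp add: sum.distrib flip: sum_distrib_left)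
  also have "\<dots> \<le> C * ((\<Sum>i\<in>S. x i powr p) + D powr p)"
    unfolding D_def using fin grow C p
    by (intro mult_left_mono add_left_mono sum_powr_le_powr_sum) (auto simp: S_def)
  finally have S_bound: "(\<Sum>i\<in>S. y i powr p) \<le> C * ((\<Sum>i\<in>S. x i powr p) + D powr p)" .
  show ?thesis
  proof (cases "j \<in> I")
    case True
    have split: "(\<Sum>i\<in>I. f i) = f j + (\<Sum>i\<in>S. f i)" for f :: "'a \<Rightarrow> real"
      unfolding S_def using fin True by (simp add: sum.remove)
    have xj: "x j = y j + D"
      using mass split[of x] split[of y] unfolding D_def by (simp add: sum_subtractf)
    have D: "0 \<le> D" unfolding D_def using grow by (intro sum_nonneg) (auto simp: S_def)
    have "y j powr p + D powr p \<le> x j powr p"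
      unfolding xj using True y D p by (intro add_powr_le_powr_add) auto
    moreover have "(C - 1) * D powr p \<le> (C - 1) * x j powr p"
      unfolding xj using True y D C p by (intro mult_left_mono powr_mono2) auto
    ultimately have "y j powr p + C * D powr p \<le> C * x j powr p"
      by (simp add: algebra_simps)
    then show ?thesis using S_bound split[of "\<lambda>i. x i powr p"] split[of "\<lambda>i. y i powr p"]
      unfolding C_def by (simp add: algebra_simps)
  next
    case False
    then have "S = I" by (auto simp: S_def)
    then have "D = 0" using mass unfolding D_def by (simp add: sum_subtractf)
    then show ?thesis using S_bound p \<open>S = I\<close> unfolding C_def by simp
  qed
qed

lemma grad_phi_I_eq:
  assumes "finite I" "i \<in> I" "0 < x i"
  shows "grad_phi_I K s I x i = - 2 * real K powr (1/6) * sqrt s * x i powr (-1/3)"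
proof -
  define A where "A = (\<Sum>k\<in>I - {i}. x k powr (2/3))"
  have "phi_I K s I (x(i := z)) = - 3 * real K powr (1/6) * sqrt s * (z powr (2/3) + A)" for z
  proof -
    have "(\<Sum>k\<in>I - {i}. (x(i := z)) k powr (2/3)) = A"
      unfolding A_def by (intro sum.cong) auto
    then show ?thesis unfolding phi_I_def using assms(1,2) by (simp add: sum.remove)
  qed
  then have "grad_phi_I K s I x i = deriv (\<lambda>z. - 3 * real K powr (1/6) * sqrt s * (z powr (2/3) + A)) (x i)"
    unfolding grad_phi_I_def by presburger
  also have "\<dots> = - 3 * real K powr (1/6) * sqrt s * (2/3 * x i powr (2/3 - 1) + 0)"
    by (intro DERIV_imp_deriv DERIV_cmult DERIV_add has_real_derivative_powr assms(3) DERIV_const)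
  finally show ?thesis by simp
qed

lemma grad_phi_I_step_eq:
  assumes "finite I" "i \<in> I" "0 < x i" "0 < y i"
    and "grad_phi_I K s' I y i = grad_phi_I K s I x i - L + c"
  shows "2 * real K powr (1/6) * (sqrt s' * y i powr (-1/3) - sqrt s * x i powr (-1/3)) = L - c"
  using assms grad_phi_I_eq[of I i x] grad_phi_I_eq[of I i y]
  by (simp add: algebra_simps)

lemma powr_four_thirds_le_of_dual_le:
  fixes s s' u v :: real
  assumes "0 < s" "0 \<le> s'" "0 < u" "0 < v"
    and "sqrt s * u powr (-1/3) \<le> sqrt s' * v powr (-1/3)"
  shows "v powr (4/3) \<le> (s' / s)^2 * u powr (4/3)"
proof -
  have "sqrt s * v powr (1/3) \<le> sqrt s' * u powr (1/3)"
    using assms by (simp add: powr_minus_divide field_simps)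
  then have "(sqrt s * v powr (1/3))^4 \<le> (sqrt s' * u powr (1/3))^4"
    using assms(1) by (intro power_mono) auto
  moreover have "(w powr (1/3))^4 = w powr (4/3)" if "0 < w" for w :: real
    using that by (simp add: powr_realpow[symmetric] powr_powr)
  moreover have "sqrt s ^ 4 = s^2" "sqrt s' ^ 4 = s'^2"
    using assms(1,2) by (simp_all add: real_sqrt_power_even)
  ultimately have "s^2 * v powr (4/3) \<le> s'^2 * u powr (4/3)"
    using assms by (simp add: power_mult_distrib)
  then show ?thesis using assms(1) by (simp add: field_simps power_divide)
qed

lemma less_of_dual_less:
  fixes s s' u v :: real
  assumes "0 \<le> s" "s \<le> s'" "0 < u" "0 < v"
    and "sqrt s' * v powr (-1/3) < sqrt s * u powr (-1/3)"
  shows "u < v"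
proof (rule ccontr)
  assume "\<not> u < v"
  then have "u powr (-1/3) \<le> v powr (-1/3)" using assms(4) by (intro powr_mono2') auto
  then have "sqrt s * u powr (-1/3) \<le> sqrt s' * v powr (-1/3)"
    using assms(1,2) by (intro mult_mono) auto
  then show False using assms(5) by simp
qed

lemma grad_phi_I_step_powr_le:
  assumes "finite I" "i \<in> I" "0 < K" "0 < x i" "0 < y i" "0 < s" "0 \<le> s'"
    and "grad_phi_I K s' I y i = grad_phi_I K s I x i - L + c" "c \<le> L"
  shows "y i powr (4/3) \<le> (s' / s)^2 * x i powr (4/3)"
proof (intro powr_four_thirds_le_of_dual_le)
  have "0 \<le> 2 * real K powr (1/6) * (sqrt s' * y i powr (-1/3) - sqrt s * x i powr (-1/3))"
    using grad_phi_I_step_eq[OF assms(1,2,4,5,8)] assms(9) by simp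
  then show "sqrt s * x i powr (-1/3) \<le> sqrt s' * y i powr (-1/3)"
    using assms(3) by (simp add: zero_le_mult_iff)
qed (use assms in auto)

lemma grad_phi_I_step_less:
  assumes "finite I" "i \<in> I" "0 < K" "0 < x i" "0 < y i" "0 \<le> s" "s \<le> s'"
    and "grad_phi_I K s' I y i = grad_phi_I K s I x i - L + c" "L < c"
  shows "x i < y i"
proof (rule less_of_dual_less[OF assms(6,7,4,5)])
  have "2 * real K powr (1/6) * (sqrt s' * y i powr (-1/3) - sqrt s * x i powr (-1/3)) < 0"
    using grad_phi_I_step_eq[OF assms(1,2,4,5,8)] assms(9) by simp
  then show "sqrt s' * y i powr (-1/3) < sqrt s * x i powr (-1/3)"
    using assms(3) by (simp add: mult_less_0_iff)
qed

theorem lemma26: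
  fixes K t j :: nat and I :: "nat set" and x y l g :: "nat \<Rightarrow> real" and c :: real
  assumes "t \<ge> 1"
    and "I \<subseteq> {1..K}"
    and "\<forall>i\<in>I. 0 < x i \<and> x i \<le> 1"
    and "\<forall>i\<in>I. 0 < y i \<and> y i \<le> 1"
    and "(\<Sum>i\<in>I. x i) = (\<Sum>i\<in>I. y i)"
    and "j \<in> {1..K}"
    and "\<forall>i\<in>{1..K}. 0 \<le> l i \<and> l i \<le> 1"
    and "\<forall>i\<in>{1..K}. 0 < g i"
    and "(\<Sum>i\<in>{1..K}. g i) = 1"
    and "\<forall>i\<in>I. grad_phi_I K (real (t + 1)) I y i
                 = grad_phi_I K (real t) I x i - loss_est j l g i + c"
  shows "(\<Sum>i\<in>I. y i powr (4/3)) \<le> 2 * (1 + 1 / real t)^2 * (\<Sum>i\<in>I. x i powr (4/3))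
       \<and> 2 * (1 + 1 / real t)^2 * (\<Sum>i\<in>I. x i powr (4/3)) \<le> 8 * (\<Sum>i\<in>I. x i powr (4/3))"
proof -
  have fin: "finite I" using assms(2) finite_subset by blast
  have K: "0 < K" if "i \<in> I" for i using that assms(2) by auto
  define r where "r = (1 + 1 / real t)^2"
  have "1 \<le> 1 + 1 / real t" "1 + 1 / real t \<le> 2" using assms(1) by auto
  then have r: "1 \<le> r" "r \<le> 4"
    unfolding r_def using power_mono[of "1 + 1 / real t" 2 2] by (auto simp: one_le_power)
  have Sx: "0 \<le> (\<Sum>i\<in>I. x i powr (4/3))" by (intro sum_nonneg) auto
  have "(\<Sum>i\<in>I. y i powr (4/3)) \<le> 2 * r * (\<Sum>i\<in>I. x i powr (4/3))"
  proof (cases "c \<le> 0")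
    case True
    have "y i powr (4/3) \<le> r * x i powr (4/3)" if i: "i \<in> I" for i
    proof -
      have "0 \<le> loss_est j l g i"
        using i assms(2,7,8) by (auto simp: loss_est_def intro!: divide_nonneg_pos)
      then have "y i powr (4/3) \<le> (real (t + 1) / real t)^2 * x i powr (4/3)"
        using i K[OF i] True assms(1,3,4,10) by (intro grad_phi_I_step_powr_le[OF fin, where L = "loss_est j l g i" and c = c]) auto
      then show ?thesis using assms(1) by (simp add: r_def field_simps)
    qed
    then have "(\<Sum>i\<in>I. y i powr (4/3)) \<le> r * (\<Sum>i\<in>I. x i powr (4/3))"
      by (simp add: sum_distrib_left sum_mono)
    also have "\<dots> \<le> 2 * r * (\<Sum>i\<in>I. x i powr (4/3))"
      using r by (intro mult_right_mono Sx) auto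
    finally show ?thesis .
  next
    case False
    have "x i \<le> y i" if i: "i \<in> I - {j}" for i
      using i K[of i] False assms(1,3,4,10)
      by (intro less_imp_le grad_phi_I_step_less[OF fin, of i K x y "real t" "real (t + 1)" "loss_est j l g i" c])
         (auto simp: loss_est_def)
    then have "(\<Sum>i\<in>I. y i powr (4/3)) \<le> 2 powr (4/3 - 1) * (\<Sum>i\<in>I. x i powr (4/3))"
      using fin assms(3-5) by (intro sum_powr_le_if_mass_moves_from_one) auto
    also have "\<dots> \<le> 2 * r * (\<Sum>i\<in>I. x i powr (4/3))"
      using powr_mono[of "4/3 - 1" 1 2] r by (intro mult_right_mono Sx) auto
    finally show ?thesis .
  qed
  moreover have "2 * r * (\<Sum>i\<in>I. x i powr (4/3)) \<le> 8 * (\<Sum>i\<in>I. x i powr (4/3))"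
    using r by (intro mult_right_mono Sx) auto
  ultimately show ?thesis unfolding r_def by simp
qed

end
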